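(* Let $X$ be a nonzero Hermitian $d\times d$ matrix and $y=|\mathrm{tr}(X)|/\|X\|_2$. Then $$\frac{24\,\mathrm{tr}\big(P_{\mathrm{Sym}^4}X^{\otimes4}\big)}{\big(\mathrm{tr}(X^2)+\mathrm{tr}(X)^2\big)^2}\le 3+\frac{6+8y-2y^4}{(1+y^2)^2}\le\frac35\big(7+4\cdot2^{1/3}+3\cdot2^{2/3}\big)\approx10.08113 .$$ The second inequality is an equality iff $y=2^{1/3}-1$. In particular, if $\mathrm{tr}(X)=0$, the left-hand side is strictly less than $9$.
   Context: $P_{\mathrm{Sym}^4}$ is the orthogonal projector onto the totally symmetric subspace of $(\mathbb{C}^d)^{\otimes 4}$. $\|X\|_2$ is the Hilbert–Schmidt norm. *)

theory Defs
  imports "HOL-Analysis.Analysis"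
begin

text \<open>d x d complex matrices are complex^'n^'n with 'n a finite type, d = CARD('n).
  The space (C^d)^{tensor 4} has basis indexed by 'n^4 (i.e. maps from the 4 tensor slots to 'n).\<close>

definition hermitian_mat :: "complex^'n::finite^'n \<Rightarrow> bool" where
  "hermitian_mat X \<longleftrightarrow> (\<forall>i j. X$i$j = cnj (X$j$i))"

definition hs_norm :: "complex^'n::finite^'n \<Rightarrow> real" where
  "hs_norm X = sqrt (\<Sum>i\<in>UNIV. \<Sum>j\<in>UNIV. (cmod (X$i$j))\<^sup>2)"

definition tensor4 :: "complex^'n::finite^'n \<Rightarrow> complex^('n^4)^('n^4)" where
  "tensor4 X = (\<chi> i j. \<Prod>m\<in>UNIV. X$(i$m)$(j$m))"

definition perm_op :: "(4 \<Rightarrow> 4) \<Rightarrow> complex^('n::finite^4)^('n^4)" where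
  "perm_op p = (\<chi> i j. if j = (\<chi> m. i$(p m)) then 1 else 0)"

definition P_sym4 :: "complex^('n::finite^4)^('n^4)" where
  "P_sym4 = (\<chi> i j. (1/24) * (\<Sum>p\<in>{p. p permutes (UNIV :: 4 set)}. (perm_op p :: complex^('n^4)^('n^4))$i$j))"

end

theory Submission
  imports Defs
begin

text \<open>
  Averaging over the symmetric group, 24 tr(P X^(x4)) is the sum over p in S_4 of
  tr(perm_op p X^(x4)), and each such term is the product of tr(X^k) over the cycles of p. Sorting by
  cycle type gives t1^4 + 6 t2 t1^2 + 8 t3 t1 + 3 t2^2 + 6 t4 with tk = tr(X^k). For Hermitian X,
  t2 = ||X||^2 and t4 = ||X^2||^2 <= ||X||^4 by submultiplicativity of the Hilbert-Schmidt norm,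
  while |t3| = |tr(X^2 X)| <= ||X^2|| ||X|| <= ||X||^3 by Cauchy-Schwarz. Dividing by ||X||^4
  bounds the quotient by (y^4 + 6y^2 + 8y + 9)/(1 + y^2)^2, and a sum-of-squares certificate,
  exact modulo c^3 = 2, shows that this rational function is maximal exactly at y = c - 1 for
  c = 2^(1/3). If tr X = 0, the minors X_aa X_cc - X_ac X_ca sum to -||X||^2, so one of them is
  nonzero; it is a term of the Lagrange identity for ||X||^4 - ||X^2||^2, which makes the bound
  on t4 strict.
\<close>

definition vec4 :: "'a \<Rightarrow> 'a \<Rightarrow> 'a \<Rightarrow> 'a \<Rightarrow> 'a^4" where
  "vec4 a b c d = (\<chi> m. if m = 1 then a else if m = 2 then b else if m = 3 then c else d)"

lemma vec4_nth [simp]: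
  "vec4 a b c d $ 1 = a" "vec4 a b c d $ 2 = b" "vec4 a b c d $ 3 = c" "vec4 a b c d $ 4 = d"
  by (simp_all add: vec4_def)

lemma vec4_eta: "vec4 (i$1) (i$2) (i$3) (i$4) = i"
  unfolding vec_eq_iff by (simp add: forall_4)

lemma sum_vec4:
  "(\<Sum>i\<in>UNIV. f i) = (\<Sum>a\<in>UNIV. \<Sum>b\<in>UNIV. \<Sum>c\<in>UNIV. \<Sum>d\<in>UNIV. f (vec4 a b c d))"
proof -
  have "(\<Sum>a\<in>UNIV. \<Sum>b\<in>UNIV. \<Sum>c\<in>UNIV. \<Sum>d\<in>UNIV. f (vec4 a b c d))
      = (\<Sum>(a,b,c,d)\<in>UNIV. f (vec4 a b c d))"
    unfolding UNIV_Times_UNIV[symmetric] sum.cartesian_product by (simp add: split_beta)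
  also have "\<dots> = (\<Sum>i\<in>UNIV. f i)"
    by (rule sum.reindex_bij_witness[of _ "\<lambda>i. (i$1, i$2, i$3, i$4)" "\<lambda>(a,b,c,d). vec4 a b c d"])
       (auto simp: vec4_eta)
  finally show ?thesis ..
qed

definition perm_trace :: "complex^'n::finite^'n \<Rightarrow> (4 \<Rightarrow> 4) \<Rightarrow> complex" where
  "perm_trace X p = (\<Sum>i\<in>UNIV. \<Prod>m\<in>UNIV. X$(i$(p m))$(i$m))"

lemma trace_P_sym4_tensor4_perm_sum:
  fixes X :: "complex^'n::finite^'n"
  shows "24 * trace ((P_sym4 :: complex^('n^4)^('n^4)) ** tensor4 X)
    = (\<Sum>p\<in>{p. p permutes (UNIV :: 4 set)}. perm_trace X p)"
proof -
  let ?S = "{p. p permutes (UNIV :: 4 set)}"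
  have "24 * trace ((P_sym4 :: complex^('n^4)^('n^4)) ** tensor4 X)
      = (\<Sum>i\<in>UNIV. \<Sum>k\<in>UNIV. \<Sum>p\<in>?S. of_bool (k = (\<chi> m. i$(p m))) * tensor4 X$k$i)"
    by (simp add: of_bool_def trace_def matrix_matrix_mult_def P_sym4_def perm_op_def
        sum_distrib_left sum_distrib_right)
  also have "\<dots> = (\<Sum>i\<in>UNIV. \<Sum>p\<in>?S. tensor4 X$(\<chi> m. i$(p m))$i)"
    by (subst sum.swap)
       (simp add: of_bool_def if_distrib[where f = "\<lambda>x. x * _"] sum.delta' cong: if_cong)
  also have "\<dots> = (\<Sum>p\<in>?S. perm_trace X p)"
    by (subst sum.swap) (simp add: perm_trace_def tensor4_def)
  finally show ?thesis .
qed

lemma perm_trace_conj: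
  assumes "q permutes UNIV" and "p \<circ> q = q \<circ> r"
  shows "perm_trace X p = perm_trace X r"
proof -
  have pq: "p (q m) = q (r m)" for m
    using fun_cong[OF assms(2), of m] by simp
  have q_inv: "q (inv q m) = m" "inv q (q m) = m" for m
    using assms(1) permutes_inverses by fastforce+
  have "perm_trace X p = (\<Sum>i\<in>UNIV. \<Prod>m\<in>UNIV. X$(i$(p (q m)))$(i$(q m)))"
    unfolding perm_trace_def by (subst prod.permute[OF assms(1)]) (simp add: o_def)
  also have "\<dots> = (\<Sum>i\<in>UNIV. \<Prod>m\<in>UNIV. X$((\<chi> k. i$(q k))$(r m))$((\<chi> k. i$(q k))$m))"
    by (simp add: pq)
  also have "\<dots> = perm_trace X r"
    unfolding perm_trace_def
    by (rule sum.reindex_bij_witness[of _ "\<lambda>i. \<chi> k. i$(inv q k)" "\<lambda>i. \<chi> k. i$(q k)"])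
       (simp_all add: q_inv vec_eq_iff)
  finally show ?thesis .
qed

lemma prod_UNIV_4: "(\<Prod>m\<in>(UNIV::4 set). f m) = f 1 * f 2 * f 3 * f 4"
  unfolding UNIV_4 by (simp add: ac_simps)

lemma perm_trace_vec4:
  "perm_trace X p = (\<Sum>a\<in>UNIV. \<Sum>b\<in>UNIV. \<Sum>c\<in>UNIV. \<Sum>d\<in>UNIV.
     X$(vec4 a b c d$(p 1))$a * X$(vec4 a b c d$(p 2))$b *
     X$(vec4 a b c d$(p 3))$c * X$(vec4 a b c d$(p 4))$d)"
  unfolding perm_trace_def prod_UNIV_4
    sum_vec4[where f = "\<lambda>i. X$(i$(p 1))$(i$1) * X$(i$(p 2))$(i$2) * X$(i$(p 3))$(i$3) * X$(i$(p 4))$(i$4)"]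
  by (simp only: vec4_nth)

text \<open>The unqualified name transpose denotes the matrix transpose.\<close>

abbreviation (input) swap :: "4 \<Rightarrow> 4 \<Rightarrow> 4 \<Rightarrow> 4" where
  "swap \<equiv> Transposition.transpose"

lemma perm_trace_id: "perm_trace X id = trace X ^ 4"
  unfolding perm_trace_vec4 trace_def
  by (simp only: id_apply vec4_nth sum_distrib_left[symmetric] sum_distrib_right[symmetric]
      power4_eq_xxxx)

lemma trace_square_eq_sum: "trace (X ** X) = (\<Sum>a\<in>UNIV. \<Sum>b\<in>UNIV. X$a$b * X$b$a)"
  by (simp add: trace_def matrix_matrix_mult_def)

lemma perm_trace_transposition: "perm_trace X (swap 1 2) = trace (X ** X) * trace X ^ 2"
proof -
  have "perm_trace X (swap 1 2)
      = (\<Sum>a\<in>UNIV. \<Sum>b\<in>UNIV. \<Sum>c\<in>UNIV. \<Sum>d\<in>UNIV. X$a$b * X$b$a * X$c$c * X$d$d)"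
    unfolding perm_trace_vec4 by (simp add: mult.commute)
  also have "\<dots> = trace (X ** X) * trace X * trace X"
    unfolding trace_square_eq_sum unfolding trace_def
    by (simp only: sum_distrib_left[symmetric] sum_distrib_right[symmetric])
  finally show ?thesis by (simp add: power2_eq_square mult.assoc)
qed

lemma perm_trace_double_transposition:
  "perm_trace X (swap 1 2 \<circ> swap 3 4) = trace (X ** X) ^ 2"
proof -
  have "perm_trace X (swap 1 2 \<circ> swap 3 4)
      = (\<Sum>a\<in>UNIV. \<Sum>b\<in>UNIV. \<Sum>c\<in>UNIV. \<Sum>d\<in>UNIV. (X$a$b * X$b$a) * (X$c$d * X$d$c))"
    unfolding perm_trace_vec4 by (simp add: mult.commute mult.left_commute)
  also have "\<dots> = trace (X ** X) * trace (X ** X)"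
    unfolding trace_square_eq_sum
    by (simp only: sum_distrib_left[symmetric] sum_distrib_right[symmetric])
  finally show ?thesis by (simp add: power2_eq_square)
qed

lemma trace_cube_eq_sum:
  "trace (X ** (X ** X)) = (\<Sum>a\<in>UNIV. \<Sum>b\<in>UNIV. \<Sum>c\<in>UNIV. X$a$b * X$b$c * X$c$a)"
  by (simp add: trace_def matrix_matrix_mult_def sum_distrib_left sum_distrib_right mult.assoc)

lemma perm_trace_3cycle: "perm_trace X (swap 1 3 \<circ> swap 2 3) = trace (X ** (X ** X)) * trace X"
proof -
  have "perm_trace X (swap 1 3 \<circ> swap 2 3)
      = (\<Sum>a\<in>UNIV. \<Sum>b\<in>UNIV. \<Sum>c\<in>UNIV. \<Sum>d\<in>UNIV. X$a$b * X$b$c * X$c$a * X$d$d)"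
    unfolding perm_trace_vec4 by (simp add: mult.commute mult.left_commute)
  also have "\<dots> = trace (X ** (X ** X)) * trace X"
    unfolding trace_cube_eq_sum unfolding trace_def
    by (simp only: sum_distrib_left[symmetric] sum_distrib_right[symmetric])
  finally show ?thesis .
qed

lemma perm_trace_4cycle:
  "perm_trace X (swap 1 4 \<circ> (swap 2 4 \<circ> swap 3 4)) = trace (X ** (X ** (X ** X)))"
proof -
  have "perm_trace X (swap 1 4 \<circ> (swap 2 4 \<circ> swap 3 4))
      = (\<Sum>a\<in>UNIV. \<Sum>b\<in>UNIV. \<Sum>c\<in>UNIV. \<Sum>d\<in>UNIV. X$a$b * X$b$c * X$c$d * X$d$a)"
    unfolding perm_trace_vec4 by (simp add: mult.commute mult.left_commute)
  also have "\<dots> = trace (X ** (X ** (X ** X)))"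
    by (simp add: trace_def matrix_matrix_mult_def sum_distrib_left sum_distrib_right mult.assoc)
  finally show ?thesis .
qed

text \<open>
  Every permutation occurring in the expansion of the sum over S_4 is related to the
  representative of its cycle type; the proof tries the listed conjugators in turn.
\<close>

lemma perm_trace_conjugacy_classes:
  "perm_trace X (swap 3 4) = perm_trace X (swap 1 2)"
  "perm_trace X (swap 2 3) = perm_trace X (swap 1 2)"
  "perm_trace X (swap 2 4) = perm_trace X (swap 1 2)"
  "perm_trace X (swap 1 3) = perm_trace X (swap 1 2)"
  "perm_trace X (swap 1 4) = perm_trace X (swap 1 2)"
  "perm_trace X (swap 1 3 \<circ> swap 2 4) = perm_trace X (swap 1 2 \<circ> swap 3 4)"
  "perm_trace X (swap 1 4 \<circ> swap 2 3) = perm_trace X (swap 1 2 \<circ> swap 3 4)"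
  "perm_trace X (swap 2 3 \<circ> swap 3 4) = perm_trace X (swap 1 3 \<circ> swap 2 3)"
  "perm_trace X (swap 2 4 \<circ> swap 3 4) = perm_trace X (swap 1 3 \<circ> swap 2 3)"
  "perm_trace X (swap 1 2 \<circ> swap 2 3) = perm_trace X (swap 1 3 \<circ> swap 2 3)"
  "perm_trace X (swap 1 2 \<circ> swap 2 4) = perm_trace X (swap 1 3 \<circ> swap 2 3)"
  "perm_trace X (swap 1 3 \<circ> swap 3 4) = perm_trace X (swap 1 3 \<circ> swap 2 3)"
  "perm_trace X (swap 1 4 \<circ> swap 3 4) = perm_trace X (swap 1 3 \<circ> swap 2 3)"
  "perm_trace X (swap 1 4 \<circ> swap 2 4) = perm_trace X (swap 1 3 \<circ> swap 2 3)"
  "perm_trace X (swap 1 2 \<circ> (swap 2 3 \<circ> swap 3 4)) = perm_trace X (swap 1 4 \<circ> (swap 2 4 \<circ> swap 3 4))"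
  "perm_trace X (swap 1 2 \<circ> (swap 2 4 \<circ> swap 3 4)) = perm_trace X (swap 1 4 \<circ> (swap 2 4 \<circ> swap 3 4))"
  "perm_trace X (swap 1 3 \<circ> (swap 2 3 \<circ> swap 3 4)) = perm_trace X (swap 1 4 \<circ> (swap 2 4 \<circ> swap 3 4))"
  "perm_trace X (swap 1 3 \<circ> (swap 2 4 \<circ> swap 3 4)) = perm_trace X (swap 1 4 \<circ> (swap 2 4 \<circ> swap 3 4))"
  "perm_trace X (swap 1 4 \<circ> (swap 2 3 \<circ> swap 3 4)) = perm_trace X (swap 1 4 \<circ> (swap 2 4 \<circ> swap 3 4))"
  by ((rule perm_trace_conj[where q = "swap 1 2"] perm_trace_conj[where q = "swap 1 3"]
        perm_trace_conj[where q = "swap 1 4"] perm_trace_conj[where q = "swap 2 3"]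
        perm_trace_conj[where q = "swap 2 4"] perm_trace_conj[where q = "swap 3 4"]
        perm_trace_conj[where q = "swap 1 2 \<circ> swap 1 4"] perm_trace_conj[where q = "swap 1 2 \<circ> swap 2 4"]
        perm_trace_conj[where q = "swap 1 2 \<circ> swap 3 4"] perm_trace_conj[where q = "swap 1 3 \<circ> swap 2 4"];
      simp add: fun_eq_iff forall_4 permutes_compose permutes_swap_id; fail))+

lemma trace_P_sym4_tensor4_power_traces:
  fixes X :: "complex^'n::finite^'n"
  shows "24 * trace ((P_sym4 :: complex^('n^4)^('n^4)) ** tensor4 X)
    = trace X ^ 4 + 6 * trace (X ** X) * trace X ^ 2 + 8 * trace (X ** (X ** X)) * trace X
      + 3 * trace (X ** X) ^ 2 + 6 * trace (X ** (X ** (X ** X)))"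
  unfolding trace_P_sym4_tensor4_perm_sum UNIV_4
  by (simp add: sum_over_permutations_insert perm_trace_conjugacy_classes perm_trace_id
      perm_trace_transposition perm_trace_3cycle perm_trace_double_transposition perm_trace_4cycle)

lemma hs_norm_squared: "hs_norm A ^ 2 = (\<Sum>i\<in>UNIV. \<Sum>j\<in>UNIV. (cmod (A$i$j))\<^sup>2)"
  by (simp add: hs_norm_def sum_nonneg)

lemma hs_norm_nonneg: "0 \<le> hs_norm A"
  by (simp add: hs_norm_def sum_nonneg)

lemma hs_norm_pos:
  assumes "A \<noteq> 0"
  shows "0 < hs_norm A"
proof -
  obtain i j where "A$i$j \<noteq> 0"
    using assms by (metis vec_eq_iff zero_index)
  then have "0 < (\<Sum>i\<in>UNIV. \<Sum>j\<in>UNIV. (cmod (A$i$j))\<^sup>2)"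
    by (intro sum_pos2[of UNIV i] sum_pos2[of UNIV j]) (auto intro: sum_nonneg)
  then show ?thesis
    by (simp add: hs_norm_def)
qed

lemma complex_lagrange_identity:
  fixes u w :: "'b \<Rightarrow> complex"
  shows "(\<Sum>b\<in>B. (cmod (u b))\<^sup>2) * (\<Sum>b\<in>B. (cmod (w b))\<^sup>2) - (cmod (\<Sum>b\<in>B. u b * cnj (w b)))\<^sup>2
     = (\<Sum>b\<in>B. \<Sum>e\<in>B. (cmod (u b * w e - u e * w b))\<^sup>2) / 2"
proof -
  have expand: "(u b * w e - u e * w b) * cnj (u b * w e - u e * w b)
     = (u b * cnj (u b)) * (w e * cnj (w e)) - (u b * cnj (w b)) * (w e * cnj (u e))
       - (w b * cnj (u b)) * (u e * cnj (w e)) + (w b * cnj (w b)) * (u e * cnj (u e))" for b e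
    by (simp add: algebra_simps)
  have "(\<Sum>b\<in>B. u b * cnj (u b)) * (\<Sum>b\<in>B. w b * cnj (w b))
      - (\<Sum>b\<in>B. u b * cnj (w b)) * (\<Sum>b\<in>B. w b * cnj (u b))
      = (\<Sum>b\<in>B. \<Sum>e\<in>B. (u b * w e - u e * w b) * cnj (u b * w e - u e * w b)) / 2"
    unfolding expand
    by (simp only: sum.distrib sum_subtractf sum_distrib_left[symmetric] sum_distrib_right[symmetric])
       (simp add: algebra_simps)
  then have "complex_of_real ((\<Sum>b\<in>B. (cmod (u b))\<^sup>2) * (\<Sum>b\<in>B. (cmod (w b))\<^sup>2)
      - (cmod (\<Sum>b\<in>B. u b * cnj (w b)))\<^sup>2)
    = complex_of_real ((\<Sum>b\<in>B. \<Sum>e\<in>B. (cmod (u b * w e - u e * w b))\<^sup>2) / 2)"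
    by (simp only: of_real_diff of_real_mult of_real_sum of_real_divide complex_norm_square)
       (simp add: mult.commute)
  then show ?thesis
    using of_real_eq_iff by blast
qed

lemma hs_norm_mult_defect:
  fixes A B :: "complex^'n::finite^'n"
  shows "hs_norm A ^ 2 * hs_norm B ^ 2 - hs_norm (A ** B) ^ 2
    = (\<Sum>a\<in>UNIV. \<Sum>c\<in>UNIV. \<Sum>b\<in>UNIV. \<Sum>e\<in>UNIV.
         (cmod (A$a$b * cnj (B$e$c) - A$a$e * cnj (B$b$c)))\<^sup>2) / 2"
proof -
  have "hs_norm A ^ 2 * hs_norm B ^ 2
      = (\<Sum>a\<in>UNIV. \<Sum>c\<in>UNIV.
          (\<Sum>b\<in>UNIV. (cmod (A$a$b))\<^sup>2) * (\<Sum>b\<in>UNIV. (cmod (cnj (B$b$c)))\<^sup>2))"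
    unfolding hs_norm_squared complex_mod_cnj sum_product[symmetric]
    by (subst (2) sum.swap) (rule refl)
  moreover have "hs_norm (A ** B) ^ 2
      = (\<Sum>a\<in>UNIV. \<Sum>c\<in>UNIV. (cmod (\<Sum>b\<in>UNIV. A$a$b * cnj (cnj (B$b$c))))\<^sup>2)"
    by (simp add: hs_norm_squared matrix_matrix_mult_def)
  ultimately show ?thesis
    by (simp only: sum_subtractf[symmetric] complex_lagrange_identity sum_divide_distrib)
qed

lemma hs_norm_mult_le: "hs_norm (A ** B) \<le> hs_norm A * hs_norm B"
proof (rule power2_le_imp_le)
  have "0 \<le> hs_norm A ^ 2 * hs_norm B ^ 2 - hs_norm (A ** B) ^ 2"
    unfolding hs_norm_mult_defect by (intro divide_nonneg_pos sum_nonneg) auto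
  then show "hs_norm (A ** B) ^ 2 \<le> (hs_norm A * hs_norm B) ^ 2"
    by (simp add: power_mult_distrib)
qed (simp add: hs_norm_nonneg)

lemma cmod_trace_mult_le: "cmod (trace (A ** B)) \<le> hs_norm A * hs_norm B"
proof -
  let ?I = "UNIV \<times> UNIV"
  let ?f = "\<lambda>p. cmod (A$fst p$snd p)" and ?g = "\<lambda>p. cmod (B$snd p$fst p)"
  have "cmod (trace (A ** B)) \<le> (\<Sum>p\<in>?I. \<bar>?f p\<bar> * \<bar>?g p\<bar>)"
    unfolding trace_def matrix_matrix_mult_def sum.cartesian_product'
    by (auto intro!: order_trans[OF norm_sum] sum_mono simp: norm_mult)
  also have "\<dots> \<le> L2_set ?f ?I * L2_set ?g ?I"
    by (rule L2_set_mult_ineq)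
  also have "\<dots> = hs_norm A * hs_norm B"
    unfolding L2_set_def hs_norm_def sum.cartesian_product'
    by (simp add: sum.swap[of "\<lambda>a c. (cmod (B$c$a))\<^sup>2"])
  finally show ?thesis .
qed

lemma hermitian_cnj: "hermitian_mat X \<Longrightarrow> cnj (X$i$j) = X$j$i"
  unfolding hermitian_mat_def by (metis complex_cnj_cnj)

lemma hermitian_mat_square:
  assumes "hermitian_mat X"
  shows "hermitian_mat (X ** X)"
  unfolding hermitian_mat_def matrix_matrix_mult_def
  by (simp add: hermitian_cnj[OF assms] mult.commute)

lemma trace_hermitian_real:
  assumes "hermitian_mat X"
  shows "trace X = of_real (Re (trace X))"
proof -
  have "cnj (trace X) = trace X"
    by (simp add: trace_def hermitian_cnj[OF assms])
  then have "Im (trace X) = 0"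
    by (simp add: complex_eq_iff)
  then show ?thesis
    by (simp add: complex_eq_iff)
qed

lemma trace_hermitian_square:
  assumes "hermitian_mat X"
  shows "trace (X ** X) = of_real (hs_norm X ^ 2)"
proof -
  have "trace (X ** X) = (\<Sum>i\<in>UNIV. \<Sum>j\<in>UNIV. X$i$j * cnj (X$i$j))"
    by (simp add: trace_def matrix_matrix_mult_def hermitian_cnj[OF assms])
  also have "\<dots> = of_real (hs_norm X ^ 2)"
    by (simp only: hs_norm_squared of_real_sum complex_norm_square)
  finally show ?thesis .
qed

lemma hs_norm_square_lt_if_trace_zero:
  assumes herm: "hermitian_mat X" and tr: "trace X = 0" and nz: "X \<noteq> 0"
  shows "hs_norm (X ** X) < hs_norm X ^ 2"
proof -
  define z where "z a c = X$a$a * X$c$c - X$a$c * X$c$a" for a c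
  have "(\<Sum>a\<in>UNIV. \<Sum>c\<in>UNIV. z a c) = trace X * trace X - trace (X ** X)"
    by (simp add: z_def trace_def matrix_matrix_mult_def sum_subtractf sum_product)
  also have "\<dots> \<noteq> 0"
    using tr trace_hermitian_square[OF herm] hs_norm_pos[OF nz] by simp
  finally obtain a c where "z a c \<noteq> 0"
    by (metis (no_types, lifting) sum.neutral)
  \<comment> \<open>z a c is the term b = a, e = c of the defect of submultiplicativity\<close>
  then have "(cmod (X$a$a * cnj (X$c$c) - X$a$c * cnj (X$a$c)))\<^sup>2 \<noteq> 0"
    by (simp add: z_def hermitian_cnj[OF herm])
  then have "(\<Sum>a\<in>UNIV. \<Sum>c\<in>UNIV. \<Sum>b\<in>UNIV. \<Sum>e\<in>UNIV.
         (cmod (X$a$b * cnj (X$e$c) - X$a$e * cnj (X$b$c)))\<^sup>2) \<noteq> 0"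
    by (auto simp: sum_nonneg_eq_0_iff sum_nonneg)
  then have "0 < hs_norm X ^ 2 * hs_norm X ^ 2 - hs_norm (X ** X) ^ 2"
    unfolding hs_norm_mult_defect
    by (intro divide_pos_pos order.not_eq_order_implies_strict sum_nonneg) auto
  then have "hs_norm (X ** X) ^ 2 < (hs_norm X ^ 2) ^ 2"
    by (simp only: power2_eq_square[of "hs_norm X ^ 2"] diff_gt_0_iff_gt)
  then show ?thesis
    by (rule power2_less_imp_less[OF _ zero_le_power2])
qed

lemma cmod_trace_cube_le: "cmod (trace (X ** (X ** X))) \<le> hs_norm X ^ 3"
proof -
  have "cmod (trace (X ** (X ** X))) \<le> hs_norm (X ** X) * hs_norm X"
    using cmod_trace_mult_le[of "X ** X" X] by (simp add: matrix_mul_assoc)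
  also have "\<dots> \<le> hs_norm X ^ 2 * hs_norm X"
    using hs_norm_mult_le[of X X] by (simp add: mult_right_mono hs_norm_nonneg power2_eq_square)
  finally show ?thesis
    by (simp add: power3_eq_cube power2_eq_square)
qed

lemma Re_trace_P_sym4_tensor4_hermitian:
  fixes X :: "complex^'n::finite^'n"
  assumes herm: "hermitian_mat X"
  defines "t \<equiv> Re (trace X)" and "v \<equiv> Re (trace (X ** (X ** X)))"
  shows "24 * Re (trace ((P_sym4 :: complex^('n^4)^('n^4)) ** tensor4 X))
    = t^4 + 6 * hs_norm X ^ 2 * t^2 + 8 * t * v + 3 * hs_norm X ^ 4 + 6 * hs_norm (X ** X) ^ 2"
proof -
  define a where "a = t^4 + 6 * hs_norm X ^ 2 * t^2 + 3 * hs_norm X ^ 4 + 6 * hs_norm (X ** X) ^ 2"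
  have "trace (X ** (X ** (X ** X))) = of_real (hs_norm (X ** X) ^ 2)"
    using trace_hermitian_square[OF hermitian_mat_square[OF herm]] by (simp add: matrix_mul_assoc)
  then have cx: "24 * trace ((P_sym4 :: complex^('n^4)^('n^4)) ** tensor4 X)
      = of_real a + of_real (8 * t) * trace (X ** (X ** X))"
    unfolding trace_P_sym4_tensor4_power_traces a_def t_def
    by (simp add: trace_hermitian_square[OF herm] trace_hermitian_real[OF herm, symmetric]
        algebra_simps)
  have Re_linear: "Re (of_real c + of_real d * z) = c + d * Re z" for c d z
    by simp
  have "24 * Re (trace ((P_sym4 :: complex^('n^4)^('n^4)) ** tensor4 X))
      = Re (24 * trace ((P_sym4 :: complex^('n^4)^('n^4)) ** tensor4 X))"
    by simp
  also have "\<dots> = a + 8 * t * v"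
    unfolding cx Re_linear v_def ..
  finally show ?thesis
    by (simp add: a_def)
qed

lemma quartic_moment_bound:
  fixes s t u v :: real
  assumes s_pos: "0 < s" and u: "0 \<le> u" "u \<le> s^2" and v: "\<bar>v\<bar> \<le> s^3"
  defines "y \<equiv> \<bar>t\<bar> / s"
  shows "(t^4 + 6 * s^2 * t^2 + 8 * t * v + 3 * s^4 + 6 * u^2) / (s^2 + t^2)^2
    \<le> 3 + (6 + 8*y - 2*y^4) / (1 + y\<^sup>2)\<^sup>2"
proof -
  have t_abs: "\<bar>t\<bar> = y * s"
    using s_pos by (simp add: y_def)
  have t_sq: "t^2 = y^2 * s^2"
    using power2_abs[of t] by (simp add: t_abs power_mult_distrib)
  have t_4: "t^4 = y^4 * s^4"
    using power_abs[of t 4] by (simp add: t_abs power_mult_distrib)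
  have "t * v \<le> \<bar>t\<bar> * \<bar>v\<bar>"
    by (simp add: abs_mult[symmetric])
  also have "\<dots> \<le> y * s * s^3"
    using v t_abs by (simp add: mult_left_mono)
  finally have tv: "t * v \<le> y * s^4"
    by (simp add: power3_eq_cube power4_eq_xxxx mult.assoc)
  have "u^2 \<le> (s^2)^2"
    using u by (intro power_mono) auto
  then have uu: "u^2 \<le> s^4"
    by (simp add: power_mult[symmetric])
  have num: "t^4 + 6 * s^2 * t^2 + 8 * t * v + 3 * s^4 + 6 * u^2
      \<le> (y^4 + 6*y^2 + 8*y + 9) * s^4"
    using tv uu unfolding t_sq t_4 by (simp add: algebra_simps power4_eq_xxxx power2_eq_square)
  have denom: "(s^2 + t^2)^2 = (1 + y\<^sup>2)\<^sup>2 * s^4"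
    unfolding t_sq by (simp add: algebra_simps power4_eq_xxxx power2_eq_square)
  have "(t^4 + 6 * s^2 * t^2 + 8 * t * v + 3 * s^4 + 6 * u^2) / (s^2 + t^2)^2
      \<le> ((y^4 + 6*y^2 + 8*y + 9) * s^4) / ((1 + y\<^sup>2)\<^sup>2 * s^4)"
    unfolding denom by (rule divide_right_mono[OF num]) simp
  also have "\<dots> = (y^4 + 6*y^2 + 8*y + 9) / (1 + y\<^sup>2)\<^sup>2"
    using s_pos by simp
  also have "\<dots> = 3 + (6 + 8*y - 2*y^4) / (1 + y\<^sup>2)\<^sup>2"
  proof -
    have num_eq: "y^4 + 6*y^2 + 8*y + 9 = 3 * (1 + y\<^sup>2)\<^sup>2 + (6 + 8*y - 2*y^4)"
      by (simp add: algebra_simps power4_eq_xxxx power2_eq_square)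
    have "(1 + y\<^sup>2)\<^sup>2 \<noteq> 0"
      by (simp add: add_nonneg_eq_0_iff)
    then show ?thesis
      unfolding num_eq add_divide_distrib by simp
  qed
  finally show ?thesis .
qed

lemma cube_root_two:
  defines "c \<equiv> (2::real) powr (1/3)"
  shows "c ^ 3 = 2" and "1 < c" and "c < 13/10" and "2 powr (2/3) = c ^ 2"
proof -
  show c3: "c ^ 3 = 2"
    unfolding c_def by (simp add: powr_realpow[symmetric] powr_powr)
  show "1 < c"
    unfolding c_def by simp
  show "c < 13/10"
  proof (rule ccontr)
    assume "\<not> c < 13/10"
    then have "(13/10) ^ 3 \<le> c ^ 3"
      by (intro power_mono) auto
    then show False
      using c3 by (simp add: power3_eq_cube)
  qed
  show "2 powr (2/3) = c ^ 2"
    unfolding c_def power2_eq_square powr_add[symmetric] by simp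
qed

lemma quartic_le_cube_root_two:
  fixes y c :: real
  assumes c3: "c ^ 3 = 2" and c_gt: "1 < c" and c_lt: "c < 13/10"
  shows "6 + 8*y - 2*y^4 \<le> (6 + 12*c + 9*c^2) / 5 * (1 + y^2)^2"
    and "6 + 8*y - 2*y^4 = (6 + 12*c + 9*c^2) / 5 * (1 + y^2)^2 \<longleftrightarrow> y = c - 1"
proof -
  define A where "A = 16 + 12*c + 9*c^2"
  define B where "B = 21*c^2 + 18*c + 24"
  define R where "R = 24 - 21*c + 28*y + 30*y*c - 18*y*c^2 - 18*y^2 + 27*y^2*c"
  \<comment> \<open>a double root at y = c - 1, valid modulo the minimal polynomial of c\<close>
  have "(6 + 12*c + 9*c^2) * (1 + y^2)^2 - 5 * (6 + 8*y - 2*y^4)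
      = (y - c + 1)^2 * (A * (y + c - 1)^2 + (B - (c - 1)^2 * A)) + (c^3 - 2) * R"
    unfolding A_def B_def R_def by algebra
  then have gap: "(6 + 12*c + 9*c^2) / 5 * (1 + y^2)^2 - (6 + 8*y - 2*y^4)
      = (y - c + 1)^2 * (A * (y + c - 1)^2 + (B - (c - 1)^2 * A)) / 5"
    using c3 by (simp add: field_simps)
  have c_sq: "1 < c^2" "c^2 < 169/100"
    using c_gt c_lt power_strict_mono[of 1 c 2] power_strict_mono[of c "13/10" 2]
    by (auto simp: power2_eq_square)
  have A_bounds: "0 < A" "A \<le> 47"
    using c_sq c_gt c_lt unfolding A_def by linarith+
  have "(c - 1)^2 \<le> 9/100"
    using c_gt c_lt power_mono[of "c - 1" "3/10" 2] by (simp add: power2_eq_square)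
  then have "(c - 1)^2 * A \<le> 9/100 * 47"
    using A_bounds by (intro mult_mono) auto
  moreover have "63 \<le> B"
    using c_sq c_gt unfolding B_def by linarith
  ultimately have factor_pos: "0 < A * (y + c - 1)^2 + (B - (c - 1)^2 * A)"
    using A_bounds by (simp add: add_nonneg_pos)
  then show "6 + 8*y - 2*y^4 \<le> (6 + 12*c + 9*c^2) / 5 * (1 + y^2)^2"
    using gap by (smt (verit) divide_nonneg_pos mult_nonneg_nonneg zero_le_power2)
  have "6 + 8*y - 2*y^4 = (6 + 12*c + 9*c^2) / 5 * (1 + y^2)^2
      \<longleftrightarrow> (y - c + 1)^2 * (A * (y + c - 1)^2 + (B - (c - 1)^2 * A)) = 0"
    using gap by auto
  also have "\<dots> \<longleftrightarrow> y = c - 1"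
    using factor_pos by auto
  finally show "6 + 8*y - 2*y^4 = (6 + 12*c + 9*c^2) / 5 * (1 + y^2)^2 \<longleftrightarrow> y = c - 1" .
qed

lemma moment_ratio_le_max:
  fixes y :: real
  defines "M \<equiv> 3/5 * (7 + 4 * 2 powr (1/3) + 3 * 2 powr (2/3))"
  shows "3 + (6 + 8*y - 2*y^4) / (1 + y\<^sup>2)\<^sup>2 \<le> M"
    and "3 + (6 + 8*y - 2*y^4) / (1 + y\<^sup>2)\<^sup>2 = M \<longleftrightarrow> y = 2 powr (1/3) - 1"
proof -
  define c where "c = (2::real) powr (1/3)"
  note c = cube_root_two[folded c_def]
  have M: "M = 3 + (6 + 12*c + 9*c^2) / 5"
    unfolding M_def c(4) c_def[symmetric] by simp
  have pos: "0 < (1 + y\<^sup>2)\<^sup>2" and nz: "1 + y\<^sup>2 \<noteq> 0"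
    by (simp_all add: add_pos_nonneg add_nonneg_eq_0_iff)
  show "3 + (6 + 8*y - 2*y^4) / (1 + y\<^sup>2)\<^sup>2 \<le> M"
    unfolding M using quartic_le_cube_root_two(1)[OF c(1-3), of y] pos by (simp add: divide_le_eq)
  show "3 + (6 + 8*y - 2*y^4) / (1 + y\<^sup>2)\<^sup>2 = M \<longleftrightarrow> y = 2 powr (1/3) - 1"
    unfolding M c_def[symmetric] using quartic_le_cube_root_two(2)[OF c(1-3), of y] nz
    by (simp add: divide_eq_eq)
qed

theorem mainTheorem8:
  fixes X :: "complex^'n::finite^'n"
  assumes herm: "hermitian_mat X"
    and nz: "X \<noteq> 0"
  defines "y \<equiv> cmod (trace X) / hs_norm X"
    and "L \<equiv> 24 * Re (trace ((P_sym4 :: complex^('n^4)^('n^4)) ** tensor4 X))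
               / (Re (trace (X ** X)) + (Re (trace X))\<^sup>2)\<^sup>2"
  shows "L \<le> 3 + (6 + 8*y - 2*y^4) / (1 + y\<^sup>2)\<^sup>2
    \<and> 3 + (6 + 8*y - 2*y^4) / (1 + y\<^sup>2)\<^sup>2
           \<le> 3/5 * (7 + 4 * 2 powr (1/3) + 3 * 2 powr (2/3))
    \<and> (3 + (6 + 8*y - 2*y^4) / (1 + y\<^sup>2)\<^sup>2
           = 3/5 * (7 + 4 * 2 powr (1/3) + 3 * 2 powr (2/3))
         \<longleftrightarrow> y = 2 powr (1/3) - 1)
    \<and> (trace X = 0 \<longrightarrow> L < 9)"
proof -
  define t where "t = Re (trace X)"
  define s where "s = hs_norm X"
  define u where "u = hs_norm (X ** X)"
  define v where "v = Re (trace (X ** (X ** X)))"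
  have s_pos: "0 < s"
    using hs_norm_pos[OF nz] by (simp add: s_def)
  have u_nonneg: "0 \<le> u"
    by (simp add: u_def hs_norm_nonneg)
  have u_le: "u \<le> s^2"
    using hs_norm_mult_le[of X X] by (simp add: u_def s_def power2_eq_square)
  have v_le: "\<bar>v\<bar> \<le> s^3"
    using abs_Re_le_cmod cmod_trace_cube_le order_trans unfolding v_def s_def by blast
  have L_eq: "L = (t^4 + 6 * s^2 * t^2 + 8 * t * v + 3 * s^4 + 6 * u^2) / (s^2 + t^2)^2"
    unfolding L_def Re_trace_P_sym4_tensor4_hermitian[OF herm] trace_hermitian_square[OF herm]
    by (simp add: t_def s_def u_def v_def)
  have y_eq: "y = \<bar>t\<bar> / s"
    unfolding y_def t_def s_def by (subst trace_hermitian_real[OF herm]) simp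
  have "trace X = 0 \<longrightarrow> L < 9"
  proof
    assume "trace X = 0"
    then have "t = 0" and "u < s^2"
      using hs_norm_square_lt_if_trace_zero[OF herm _ nz] by (simp_all add: t_def u_def s_def)
    then have "u^2 < s^4"
      using power_strict_mono[of u "s^2" 2] u_nonneg by (simp add: power_mult[symmetric])
    then show "L < 9"
      unfolding L_eq using \<open>t = 0\<close> s_pos by (simp add: divide_less_eq power_mult[symmetric])
  qed
  then show ?thesis
    using quartic_moment_bound[OF s_pos u_nonneg u_le v_le, of t] moment_ratio_le_max[of y]
    unfolding L_eq y_eq by blast
qed

end
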